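(* For every $\rho\in\mathcal{S}(\mathbb{C}^2)$ one has $D_z^2\big(\rho,\tfrac12(I+\sigma_z)\big)=2-2(\mathbf{b}_\rho)_3$.
   Context: Let $\mathcal{H}=\mathbb{C}^2$, $\mathcal{H}^*$ its dual space, and $\mathcal{S}(\mathcal{H})$ the set of density operators on $\mathcal{H}$. For a linear operator $A$ on $\mathcal{H}$, its transpose $A^T$ is the operator on $\mathcal{H}^*$ defined by $(A^T\varphi)(x)=\varphi(Ax)$. $\mathcal{C}(\rho,\omega)=\{\Pi\in\mathcal{S}(\mathcal{H}\otimes\mathcal{H}^* ):\ \mathrm{tr}_{\mathcal{H}^*}[\Pi]=\omega,\ \mathrm{tr}_{\mathcal{H}}[\Pi]=\rho^T\}$. The Pauli matrices are $\sigma_1=\begin{bmatrix}0&1\\1&0\end{bmatrix}$, $\sigma_2=\begin{bmatrix}0&-i\\i&0\end{bmatrix}$, $\sigma_3=\sigma_z=\begin{bmatrix}1&0\\0&-1\end{bmatrix}$. $C_z=(\sigma_z\otimes I^T-I\otimes\sigma_z^T)^2$ and $D_z^2(\rho,\omega)=\inf\{\mathrm{tr}[\Pi C_z]:\Pi\in\mathcal{C}(\rho,\omega)\}$. The Bloch vector of $\rho$ is $\mathbf{b}_\rho=(\mathrm{tr}[\sigma_j\rho])_{j=1}^3$. *)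

theory Defs
  imports "HOL-Analysis.Analysis"
begin

text \<open>Operators on H = C^2 (and on its dual H*, in the dual basis) are 2x2 complex
  matrices, indexed by the numeral type 2 (indices 1 and 2). Operators on H (x) H*
  are matrices indexed by the product type 2 x 2, with (i,k) the basis vector
  e_i (x) e_k^*.\<close>

type_synonym cmat2 = "complex^2^2"
type_synonym cmat4 = "complex^(2\<times>2)^(2\<times>2)"

definition psd :: "complex^'n^'n \<Rightarrow> bool" where
  "psd A \<longleftrightarrow> (\<forall>v::complex^'n.
      (let q = (\<Sum>i\<in>UNIV. \<Sum>j\<in>UNIV. cnj (v$i) * A$i$j * v$j) in Im q = 0 \<and> Re q \<ge> 0))"

definition density :: "complex^'n^'n \<Rightarrow> bool" where
  "density A \<longleftrightarrow> psd A \<and> trace A = 1"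

definition kron :: "complex^'a::finite^'a \<Rightarrow> complex^'b::finite^'b \<Rightarrow> complex^('a\<times>'b)^('a\<times>'b)" where
  "kron A B = (\<chi> p q. A $ fst p $ fst q * B $ snd p $ snd q)"

definition ptrace2 :: "complex^('a::finite\<times>'b::finite)^('a\<times>'b) \<Rightarrow> complex^'a^'a" where
  "ptrace2 P = (\<chi> i j. \<Sum>k\<in>UNIV. P $ (i,k) $ (j,k))"

definition ptrace1 :: "complex^('a::finite\<times>'b::finite)^('a\<times>'b) \<Rightarrow> complex^'b^'b" where
  "ptrace1 P = (\<chi> k l. \<Sum>i\<in>UNIV. P $ (i,k) $ (i,l))"

text \<open>Pauli matrix sigma_z; the transpose A^T on H* has matrix transpose A in the dual basis.\<close>
definition sigma_z :: cmat2 where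
  "sigma_z = (\<chi> i j. if i = j then (if i = 1 then 1 else -1) else 0)"

definition couplings :: "cmat2 \<Rightarrow> cmat2 \<Rightarrow> cmat4 set" where
  "couplings \<rho> \<omega> = {P. density P \<and> ptrace2 P = \<omega> \<and> ptrace1 P = transpose \<rho>}"

definition C_z :: cmat4 where
  "C_z = (let M = kron sigma_z (transpose (mat 1)) - kron (mat 1) (transpose sigma_z) in M ** M)"

text \<open>tr[Pi C_z] is real for Hermitian Pi, C_z; we take its real part.\<close>
definition Dz2 :: "cmat2 \<Rightarrow> cmat2 \<Rightarrow> real" where
  "Dz2 \<rho> \<omega> = Inf ((\<lambda>P. Re (trace (P ** C_z))) ` couplings \<rho> \<omega>)"

text \<open>Third component of the Bloch vector, tr[sigma_3 rho] (real for density operators).\<close>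
definition bloch3 :: "cmat2 \<Rightarrow> real" where
  "bloch3 \<rho> = Re (trace (sigma_z ** \<rho>))"

end

theory Submission
  imports Defs
begin

text \<open>The target state is the pure state ket0_proj = |e_1><e_1|. The cost operator C_z is
  diagonal, with entry (s_i - s_k)^2 at e_i (x) e_k^* where s = (1,-1), i.e. 4 if i \<noteq> k and 0
  otherwise. A positive coupling whose H-marginal is pure has no mass on e_2 (x) H^*, so its cost
  is 4 times its mass at e_1 (x) e_2^*, which the H^*-marginal \<rho>^T fixes to be \<rho>$2$2. Hence the
  cost is constant on the (nonempty) set of couplings, and 4 \<rho>$2$2 = 2 - 2 (\<rho>$1$1 - \<rho>$2$2)
  because tr \<rho> = 1.\<close>

definition diag_mat :: "('n \<Rightarrow> complex) \<Rightarrow> complex^'n^'n" where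
  "diag_mat d = (\<chi> i j. if i = j then d i else 0)"

lemma diag_mat_mult: "diag_mat d ** diag_mat e = diag_mat (\<lambda>i. d i * e i)"
proof -
  have entry: "(\<Sum>k\<in>UNIV. (if i = k then d i else 0) * (if k = j then e k else 0))
      = (if i = j then d i * e i else 0)" for i j
  proof -
    have "(\<lambda>k. (if i = k then d i else 0) * (if k = j then e k else 0))
        = (\<lambda>k. if k = i then (if i = j then d i * e i else 0) else 0)"
      by auto
    then show ?thesis
      by (simp only: sum.delta finite UNIV_I if_True)
  qed
  show ?thesis
    unfolding diag_mat_def matrix_matrix_mult_def by (simp only: vec_lambda_beta entry)
qed

lemma diag_mat_diff: "diag_mat d - diag_mat e = diag_mat (\<lambda>i. d i - e i)"
  by (simp add: vec_eq_iff diag_mat_def)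

lemma transpose_diag_mat: "transpose (diag_mat d) = diag_mat d"
  by (auto simp: vec_eq_iff transpose_def diag_mat_def)

lemma mat_1_eq_diag_mat: "(mat 1 :: complex^'n^'n) = diag_mat (\<lambda>_. 1)"
  by (simp add: vec_eq_iff mat_def diag_mat_def)

lemma kron_diag_mat: "kron (diag_mat d) (diag_mat e) = diag_mat (\<lambda>p. d (fst p) * e (snd p))"
  by (auto simp: vec_eq_iff kron_def diag_mat_def prod_eq_iff)

lemma trace_mult_diag_mat: "trace (A ** diag_mat d) = (\<Sum>i\<in>UNIV. A$i$i * d i)"
proof -
  have entry: "(\<Sum>k\<in>UNIV. A$i$k * (if k = i then d k else 0)) = A$i$i * d i" for i
  proof -
    have "(\<lambda>k. A$i$k * (if k = i then d k else 0)) = (\<lambda>k. if k = i then A$i$i * d i else 0)"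
      by auto
    then show ?thesis
      by (simp only: sum.delta finite UNIV_I if_True)
  qed
  show ?thesis
    unfolding trace_def diag_mat_def matrix_matrix_mult_def by (simp only: vec_lambda_beta entry)
qed

lemma sigma_z_eq_diag_mat: "sigma_z = diag_mat (\<lambda>i. if i = 1 then 1 else -1)"
  by (simp add: vec_eq_iff sigma_z_def diag_mat_def)

lemma C_z_eq_diag_mat: "C_z = diag_mat (\<lambda>p. if fst p = snd p then 0 else 4)"
proof -
  have "C_z = diag_mat (\<lambda>p. ((if fst p = 1 then 1 else -1) - (if snd p = 1 then 1 else -1))\<^sup>2)"
    by (simp add: C_z_def sigma_z_eq_diag_mat mat_1_eq_diag_mat transpose_diag_mat kron_diag_mat
        diag_mat_diff diag_mat_mult power2_eq_square)
  also have "\<dots> = diag_mat (\<lambda>p. if fst p = snd p then 0 else 4)"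
    by (rule arg_cong[where f = diag_mat]) (auto simp: fun_eq_iff forall_2 prod_eq_iff)
  finally show ?thesis .
qed

lemma sum_UNIV_2_times:
  "sum f (UNIV::(2\<times>'b::finite) set) = (\<Sum>k\<in>UNIV. f (1,k)) + (\<Sum>k\<in>UNIV. f (2,k))"
proof -
  have "sum f (UNIV::(2\<times>'b) set) = (\<Sum>a\<in>UNIV. \<Sum>b\<in>UNIV. f (a,b))"
    by (simp add: sum.cartesian_product UNIV_Times_UNIV[symmetric] del: UNIV_Times_UNIV)
  then show ?thesis by (simp add: sum_2)
qed

lemma trace_mult_C_z: "trace (P ** C_z) = 4 * (P$(1,2)$(1,2) + P$(2,1)$(2,1))"
  by (simp add: C_z_eq_diag_mat trace_mult_diag_mat sum_UNIV_2_times sum_2 algebra_simps)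

definition quad_form :: "complex^'n^'n \<Rightarrow> complex^'n \<Rightarrow> complex" where
  "quad_form A v = (\<Sum>i\<in>UNIV. \<Sum>j\<in>UNIV. cnj (v$i) * A$i$j * v$j)"

lemma psd_iff_quad_form: "psd A \<longleftrightarrow> (\<forall>v. Im (quad_form A v) = 0 \<and> Re (quad_form A v) \<ge> 0)"
  by (simp add: psd_def quad_form_def)

lemma quad_form_axis: "quad_form A (axis p 1) = A$p$p"
  by (simp add: quad_form_def axis_def if_distrib[of cnj] if_distrib[of "\<lambda>x. _ * x"] mult_if_delta
      cong: if_cong)

lemma psd_diag_nonneg: "psd A \<Longrightarrow> Re (A$p$p) \<ge> 0"
  by (metis psd_iff_quad_form quad_form_axis)

lemma quad_form_transpose: "quad_form (transpose A) v = quad_form A (\<chi> i. cnj (v$i))"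
  unfolding quad_form_def transpose_def
  by (subst sum.swap) (simp add: mult.commute mult.left_commute)

lemma psd_transpose: "psd A \<Longrightarrow> psd (transpose A)"
  by (simp add: psd_iff_quad_form quad_form_transpose)

lemma trace_transpose: "trace (transpose A) = trace A"
  by (simp add: trace_def transpose_def)

lemma trace_kron: "trace (kron A B) = trace A * trace B"
  by (simp add: trace_def kron_def sum_product UNIV_Times_UNIV[symmetric] sum.cartesian_product
      case_prod_beta del: UNIV_Times_UNIV)

lemma ptrace2_kron: "ptrace2 (kron A B) = (\<chi> i j. trace B * A$i$j)"
  by (simp add: vec_eq_iff ptrace2_def kron_def trace_def sum_distrib_left ac_simps)

lemma ptrace1_kron: "ptrace1 (kron A B) = (\<chi> k l. trace A * B$k$l)"
  by (simp add: vec_eq_iff ptrace1_def kron_def trace_def sum_distrib_right)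

definition ket0_proj :: cmat2 where
  "ket0_proj = (\<chi> i j. if i = 1 \<and> j = 1 then 1 else 0)"

lemma half_id_plus_sigma_z: "(\<chi> i j. (1/2) * ((mat 1 :: cmat2) $ i $ j + sigma_z $ i $ j)) = ket0_proj"
  by (auto simp: vec_eq_iff mat_def sigma_z_def ket0_proj_def forall_2)

lemma trace_ket0_proj: "trace ket0_proj = 1"
  by (simp add: trace_def ket0_proj_def sum_2)

lemma quad_form_kron_ket0_proj: "quad_form (kron ket0_proj B) v = quad_form B (\<chi> k. v$(1,k))"
  by (simp add: quad_form_def kron_def ket0_proj_def sum_UNIV_2_times sum_distrib_left
      sum_distrib_right ac_simps)

lemma density_kron_ket0_proj: "density B \<Longrightarrow> density (kron ket0_proj B)"
  by (simp add: density_def psd_iff_quad_form quad_form_kron_ket0_proj trace_kron trace_ket0_proj)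

lemma product_coupling_ket0_proj:
  assumes "density \<rho>"
  shows "kron ket0_proj (transpose \<rho>) \<in> couplings \<rho> ket0_proj"
proof -
  have "density (transpose \<rho>)"
    using assms by (simp add: density_def psd_transpose trace_transpose)
  moreover have "trace (transpose \<rho>) = 1"
    using assms by (simp add: density_def trace_transpose)
  ultimately show ?thesis
    by (simp add: couplings_def density_kron_ket0_proj ptrace2_kron ptrace1_kron trace_ket0_proj
        vec_eq_iff)
qed

lemma coupling_cost_ket0_proj:
  assumes "P \<in> couplings \<rho> ket0_proj"
  shows "Re (trace (P ** C_z)) = 4 * Re (\<rho>$2$2)"
proof -
  from assms have psd: "psd P" and marg_H: "ptrace2 P = ket0_proj"
    and marg_dual: "ptrace1 P = transpose \<rho>"
    by (auto simp: couplings_def density_def)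
  have "P$(2,1)$(2,1) + P$(2,2)$(2,2) = 0"
    using arg_cong[OF marg_H, of "\<lambda>M. M$2$2"] by (simp add: ptrace2_def sum_2 ket0_proj_def)
  then have "Re (P$(2,1)$(2,1)) + Re (P$(2,2)$(2,2)) = 0"
    by (metis plus_complex.sel(1) zero_complex.sel(1))
  with psd_diag_nonneg[OF psd, of "(2,1)"] psd_diag_nonneg[OF psd, of "(2,2)"]
  have no_mass: "Re (P$(2,1)$(2,1)) = 0" "Re (P$(2,2)$(2,2)) = 0"
    by linarith+
  have "P$(1,2)$(1,2) + P$(2,2)$(2,2) = \<rho>$2$2"
    using arg_cong[OF marg_dual, of "\<lambda>M. M$2$2"] by (simp add: ptrace1_def sum_2 transpose_def)
  then have "Re (P$(1,2)$(1,2)) + Re (P$(2,2)$(2,2)) = Re (\<rho>$2$2)"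
    by (metis plus_complex.sel(1))
  moreover have "Re (trace (P ** C_z)) = 4 * Re (P$(1,2)$(1,2)) + 4 * Re (P$(2,1)$(2,1))"
    unfolding trace_mult_C_z by simp
  ultimately show ?thesis
    using no_mass by linarith
qed

lemma Dz2_ket0_proj:
  assumes "density \<rho>"
  shows "Dz2 \<rho> ket0_proj = 4 * Re (\<rho>$2$2)"
proof -
  have "couplings \<rho> ket0_proj \<noteq> {}"
    using product_coupling_ket0_proj[OF assms] by blast
  then have "(\<lambda>P. Re (trace (P ** C_z))) ` couplings \<rho> ket0_proj = {4 * Re (\<rho>$2$2)}"
    using coupling_cost_ket0_proj by auto
  then show ?thesis
    by (simp add: Dz2_def)
qed

lemma bloch3_eq_diag_diff: "bloch3 \<rho> = Re (\<rho>$1$1) - Re (\<rho>$2$2)"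
  by (simp add: bloch3_def trace_def sum_2 matrix_matrix_mult_def sigma_z_def)

theorem mainTheorem5:
  fixes \<rho> :: cmat2
  assumes "density \<rho>"
  shows "Dz2 \<rho> (\<chi> i j. (1/2) * ((mat 1 :: cmat2) $ i $ j + sigma_z $ i $ j)) = 2 - 2 * bloch3 \<rho>"
proof -
  have "Re (\<rho>$1$1) + Re (\<rho>$2$2) = 1"
    using assms by (simp add: density_def trace_def sum_2 flip: plus_complex.sel)
  then show ?thesis
    unfolding half_id_plus_sigma_z Dz2_ket0_proj[OF assms] bloch3_eq_diag_diff
    by (simp add: algebra_simps)
qed

end
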